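(* Let $n\in\mathbb N$, let $K_1,\dots,K_n$ be singular kernel functions and let $J$ be an arbitrary $n$-field function. Then the difference function restricted to the regularity set, $\Phi|_Y:Y\to\mathbb R^n$, is proper: the preimage of every compact subset of $\mathbb R^n$ is compact. Moreover, for every sequence $(\mathbf x_k)$ in $Y$ converging to a point of the boundary $\partial Y$ one has $\|\Phi(\mathbf x_k)\|\to\infty$.
   Context: A kernel function is a function $K:(-1,0)\cup(0,1)\to\mathbb R$ that is concave on $(-1,0)$ and concave on $(0,1)$ and satisfies $\lim_{t\downarrow0}K(t)=\lim_{t\uparrow0}K(t)$. It is extended to $[-1,1]$ with values in $[-\infty,\infty)$ by its one-sided limits at $-1,0,1$. A kernel function is singular if $K(0)=-\infty$. An $n$-field function is a function $J:[0,1]\to[-\infty,\infty)$ that is bounded above and whose set of finite values has total weight strictly greater than $n$. Here the points $0$ and $1$ each have weight $1/2$ and every point of $(0,1)$ has weight $1$. $S=\{\mathbf y\in\mathbb R^n:0<y_1<\dots<y_n<1\}$ and $\overline S$ is its closure. $F(\mathbf y,t)=J(t)+\sum_{i=1}^nK_i(t-y_i)$, with the convention $a+(-\infty)=-\infty$. Set $y_0:=0$ and $y_{n+1}:=1$. Let $I_j(\mathbf y)=[y_j,y_{j+1}]$ and $m_j(\mathbf y)=\sup_{t\in I_j(\mathbf y)}F(\mathbf y,t)$. The regularity set is $Y=\{\mathbf y\in S:m_j(\mathbf y)\neq-\infty\ \forall j=0,\dots,n\}$. The difference function is $\Phi(\mathbf y)=(m_1(\mathbf y)-m_0(\mathbf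 y),\dots,m_n(\mathbf y)-m_{n-1}(\mathbf y))$. *)

theory Defs
  imports "HOL-Analysis.Analysis"
begin

text \<open>Values outside [-1,1] are irrelevant.\<close>

definition kernel_function :: "(real \<Rightarrow> ereal) \<Rightarrow> bool" where
  "kernel_function K \<longleftrightarrow>
     (\<forall>t\<in>{-1<..<0} \<union> {0<..<1}. \<bar>K t\<bar> \<noteq> \<infinity>) \<and>
     concave_on {-1<..<0} (\<lambda>t. real_of_ereal (K t)) \<and>
     concave_on {0<..<1} (\<lambda>t. real_of_ereal (K t)) \<and>
     (K \<longlongrightarrow> K 0) (at_left 0) \<and>
     (K \<longlongrightarrow> K 0) (at_right 0) \<and>
     (K \<longlongrightarrow> K (-1)) (at_right (-1)) \<and>
     (K \<longlongrightarrow> K 1) (at_left 1)"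

definition singular_kernel :: "(real \<Rightarrow> ereal) \<Rightarrow> bool" where
  "singular_kernel K \<longleftrightarrow> kernel_function K \<and> K 0 = -\<infinity>"

definition weight01 :: "real set \<Rightarrow> ereal" where
  "weight01 A = (if infinite (A \<inter> {0<..<1}) then \<infinity>
     else ereal (real (card (A \<inter> {0<..<1})) + (if 0 \<in> A then 1/2 else 0)
                 + (if 1 \<in> A then 1/2 else 0)))"

definition n_field_function :: "nat \<Rightarrow> (real \<Rightarrow> ereal) \<Rightarrow> bool" where
  "n_field_function n J \<longleftrightarrow>
     (\<exists>M::real. \<forall>t\<in>{0..1}. J t \<le> ereal M) \<and>
     weight01 {t\<in>{0..1}. J t \<noteq> -\<infinity>} > ereal (real n)"

text \<open>Points of R^n are vectors in real^'n, with 'n a finite linearly ordered index type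
of cardinality n; the k-th coordinate (k = 1..n) is the coordinate at the k-th smallest index.\<close>

definition idx :: "nat \<Rightarrow> 'n::{finite,linorder}" where
  "idx k = sorted_list_of_set (UNIV :: 'n set) ! (k - 1)"

definition pos :: "'n::{finite,linorder} \<Rightarrow> nat" where
  "pos i = card {j. j < i} + 1"

definition ypt :: "real ^ 'n::{finite,linorder} \<Rightarrow> nat \<Rightarrow> real" where
  "ypt y k = (if k = 0 then 0 else if k \<le> CARD('n) then y $ (idx k :: 'n) else 1)"

definition Sset :: "(real ^ 'n::{finite,linorder}) set" where
  "Sset = {y. \<forall>k\<le>CARD('n). ypt y k < ypt y (k + 1)}"

definition Ffun :: "(real \<Rightarrow> ereal) \<Rightarrow> ('n::{finite,linorder} \<Rightarrow> real \<Rightarrow> ereal)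
                     \<Rightarrow> real ^ 'n::{finite,linorder} \<Rightarrow> real \<Rightarrow> ereal" where
  "Ffun J K y t = J t + (\<Sum>i\<in>UNIV. K i (t - y $ i))"

definition mfun :: "(real \<Rightarrow> ereal) \<Rightarrow> ('n::{finite,linorder} \<Rightarrow> real \<Rightarrow> ereal)
                     \<Rightarrow> nat \<Rightarrow> real ^ 'n::{finite,linorder} \<Rightarrow> ereal" where
  "mfun J K j y = (SUP t\<in>{ypt y j .. ypt y (j + 1)}. Ffun J K y t)"

definition Yset :: "(real \<Rightarrow> ereal) \<Rightarrow> ('n::{finite,linorder} \<Rightarrow> real \<Rightarrow> ereal)
                     \<Rightarrow> (real ^ 'n::{finite,linorder}) set" where
  "Yset J K = {y \<in> Sset. \<forall>j\<le>CARD('n). mfun J K j y \<noteq> -\<infinity>}"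

text \<open>Difference function: the component at the index of position p (p = 1..n) is m_p - m_(p-1).\<close>
definition Phi :: "(real \<Rightarrow> ereal) \<Rightarrow> ('n::{finite,linorder} \<Rightarrow> real \<Rightarrow> ereal)
                     \<Rightarrow> real ^ 'n::{finite,linorder} \<Rightarrow> real ^ 'n::{finite,linorder}" where
  "Phi J K y = (\<chi> i. real_of_ereal (mfun J K (pos i) y) - real_of_ereal (mfun J K (pos i - 1) y))"

end

theory Submission
  imports Defs
begin

text \<open>Away from the nodes y_i the function F is real-valued and continuous in (y, t), because a
concave function is continuous on an open interval; at a node it is -\<infinity>, uniformly in y,
because each kernel is bounded above and singular. Hence every m_j is lower semicontinuous at the
points of S and its restriction to S is upper semicontinuous; so the regularity set Y is open and
\<Phi> is continuous on Y.

If configurations in Y converge to a point outside Y, then some m_j tends to -\<infinity>: either two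
consecutive nodes merge and the gap I_j shrinks onto a singularity, or m_j is already -\<infinity> at the
limit. On the other hand, the n-field condition provides a point t where J is finite and which is
not a node of the limit configuration; the value of F at t keeps the largest m_l bounded below.
Since |m_l - m_j| \<le> n \<parallel>\<Phi>\<parallel> by telescoping, \<parallel>\<Phi>\<parallel> tends to infinity. Properness follows: S is bounded,
and a limit of points of Y with \<Phi> in a compact set cannot lie outside Y, so it lies in Y, where \<Phi>
is continuous.\<close>

section \<open>The configuration space\<close>

lemma ex_idx_eq: "\<exists>k\<in>{1..CARD('n)}. idx k = (i::'n::{finite,linorder})"
proof -
  let ?xs = "sorted_list_of_set (UNIV :: 'n set)"
  obtain m where "m < length ?xs" "?xs ! m = i"
    using in_set_conv_nth[of i ?xs] by auto
  then show ?thesis by (intro bexI[of _ "Suc m"]) (auto simp: idx_def)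
qed

lemma ypt_0 [simp]: "ypt y 0 = 0"
  by (simp add: ypt_def)

lemma ypt_Suc_card [simp]: "ypt (y::real^'n::{finite,linorder}) (Suc CARD('n)) = 1"
  by (simp add: ypt_def)

lemma ypt_idx: "k \<in> {1..CARD('n)} \<Longrightarrow> ypt (y::real^'n::{finite,linorder}) k = y $ idx k"
  by (simp add: ypt_def)

lemma ex_ypt_eq_coord: "\<exists>k\<in>{1..CARD('n)}. ypt y k = (y::real^'n::{finite,linorder}) $ i"
  using ex_idx_eq[of i] ypt_idx by metis

lemma tendsto_ypt:
  assumes "(f \<longlongrightarrow> y) F"
  shows "((\<lambda>z. ypt (f z) k) \<longlongrightarrow> ypt (y::real^'n::{finite,linorder}) k) F"
  by (cases "k = 0"; cases "k \<le> CARD('n)") (simp_all add: ypt_def tendsto_vec_nth assms)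

lemma open_Sset: "open (Sset :: (real^'n::{finite,linorder}) set)"
proof -
  have "continuous_on UNIV (\<lambda>y::real^'n::{finite,linorder}. ypt y k)" for k
    by (intro continuous_at_imp_continuous_on ballI)
      (simp add: continuous_at tendsto_ypt[OF tendsto_ident_at])
  then have gaps_open: "open {y::real^'n::{finite,linorder}. ypt y k < ypt y (k + 1)}" for k
    by (intro open_Collect_less)
  have Sset_eq: "(Sset :: (real^'n::{finite,linorder}) set)
      = (\<Inter>k\<in>{..CARD('n)}. {y. ypt y k < ypt y (k + 1)})"
    by (auto simp: Sset_def)
  show ?thesis
    unfolding Sset_eq by (intro open_INT ballI finite_atMost gaps_open)
qed

lemma Sset_less:
  assumes "y \<in> Sset" "k < l" "l \<le> CARD('n) + 1"
  shows "ypt (y::real^'n::{finite,linorder}) k < ypt y l"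
  using assms(2,3)
proof (induction l)
  case (Suc l)
  have "ypt y l < ypt y (Suc l)" using assms(1) Suc.prems by (simp add: Sset_def)
  then show ?case using Suc by (cases "k = l") auto
qed simp

lemma Sset_le:
  assumes "y \<in> Sset" "k \<le> l" "l \<le> CARD('n) + 1"
  shows "ypt (y::real^'n::{finite,linorder}) k \<le> ypt y l"
  using Sset_less[OF assms(1), of k l] assms(2,3) by (cases "k = l") auto

lemma Sset_coord_bounds:
  assumes "y \<in> Sset"
  shows "0 < (y::real^'n::{finite,linorder}) $ i \<and> y $ i < 1"
proof -
  obtain k where "k \<in> {1..CARD('n)}" "ypt y k = y $ i" using ex_ypt_eq_coord by blast
  then show ?thesis using Sset_less[OF assms, of 0 k] Sset_less[OF assms, of k "CARD('n) + 1"] by auto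
qed

lemma ex_gap_mem:
  assumes "y \<in> Sset" "t \<in> {0..1}"
  shows "\<exists>j\<le>CARD('n). t \<in> {ypt (y::real^'n::{finite,linorder}) j .. ypt y (j + 1)}"
proof -
  define j where "j = Max {k. k \<le> CARD('n) \<and> ypt y k \<le> t}"
  have j: "j \<le> CARD('n)" "ypt y j \<le> t"
    using Max_in[of "{k. k \<le> CARD('n) \<and> ypt y k \<le> t}"] assms(2) unfolding j_def by fastforce+
  have "t \<le> ypt y (j + 1)"
  proof (cases "j = CARD('n)")
    case False
    then have "j + 1 \<notin> {k. k \<le> CARD('n) \<and> ypt y k \<le> t}"
      using Max_ge[of "{k. k \<le> CARD('n) \<and> ypt y k \<le> t}" "j + 1"] unfolding j_def by fastforce
    then show ?thesis using False j(1) by auto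
  qed (use assms(2) in simp)
  then show ?thesis using j by auto
qed

text \<open>A point of the gap I_j(y) other than its endpoints that are nodes (0 and 1 are allowed).\<close>

definition gap_point :: "real^'n::{finite,linorder} \<Rightarrow> nat \<Rightarrow> real \<Rightarrow> bool" where
  "gap_point y j t \<longleftrightarrow> (if j = 0 then 0 \<le> t else ypt y j < t)
     \<and> (if j = CARD('n) then t \<le> 1 else t < ypt y (j + 1))"

lemma gap_point_mem:
  "j \<le> CARD('n) \<Longrightarrow> gap_point y j t \<Longrightarrow> t \<in> {ypt y j..ypt (y::real^'n::{finite,linorder}) (j + 1)}"
  by (auto simp: gap_point_def split: if_splits)

lemma gap_point_iff:
  assumes "y \<in> Sset" "j \<le> CARD('n)"
  shows "gap_point y j t \<longleftrightarrow>
    t \<in> {ypt y j..ypt (y::real^'n::{finite,linorder}) (j + 1)} \<and> (\<forall>i. t \<noteq> y $ i)"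
proof
  assume gp: "gap_point y j t"
  have "t \<noteq> y $ i" for i
  proof -
    obtain k where k: "k \<in> {1..CARD('n)}" "ypt y k = y $ i" using ex_ypt_eq_coord by blast
    show ?thesis
    proof (cases "k \<le> j")
      case True then show ?thesis using Sset_le[OF assms(1), of k j] k gp assms(2)
        by (auto simp: gap_point_def split: if_splits)
    next
      case False then show ?thesis using Sset_le[OF assms(1), of "j + 1" k] k gp
        by (auto simp: gap_point_def split: if_splits)
    qed
  qed
  then show "t \<in> {ypt y j..ypt y (j + 1)} \<and> (\<forall>i. t \<noteq> y $ i)"
    using gap_point_mem[OF assms(2) gp] by blast
next
  assume t: "t \<in> {ypt y j..ypt y (j + 1)} \<and> (\<forall>i. t \<noteq> y $ i)"
  have "j \<noteq> 0 \<Longrightarrow> ypt y j \<noteq> t" "j \<noteq> CARD('n) \<Longrightarrow> ypt y (j + 1) \<noteq> t"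
    using t assms(2) ypt_idx[of j y] ypt_idx[of "j + 1" y] by auto
  then show "gap_point y j t"
    using t by (auto simp: gap_point_def order_le_less)
qed

lemma eventually_gap_point:
  assumes "gap_point (y::real^'n::{finite,linorder}) j t" "(f \<longlongrightarrow> y) F"
  shows "eventually (\<lambda>z. gap_point (f z) j t) F"
proof -
  have "eventually (\<lambda>z. if j = 0 then 0 \<le> t else ypt (f z) j < t) F"
    using assms order_tendstoD(2)[OF tendsto_ypt[OF assms(2), where k = j]]
    by (auto simp: gap_point_def)
  moreover have "eventually (\<lambda>z. if j = CARD('n) then t \<le> 1 else t < ypt (f z) (j + 1)) F"
    using assms order_tendstoD(1)[OF tendsto_ypt[OF assms(2), where k = "j + 1"]]
    by (auto simp: gap_point_def)
  ultimately show ?thesis by eventually_elim (simp add: gap_point_def)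
qed

lemma gap_subset_01:
  "y \<in> Sset \<Longrightarrow> j \<le> CARD('n) \<Longrightarrow> {ypt y j..ypt (y::real^'n::{finite,linorder}) (j + 1)} \<subseteq> {0..1}"
  using Sset_le[of y 0 j] Sset_le[of y "j + 1" "CARD('n) + 1"] by auto

lemma Sset_margin:
  assumes "y \<in> Sset"
  shows "\<exists>a>0. \<forall>i. a \<le> (y::real^'n::{finite,linorder}) $ i \<and> y $ i \<le> 1 - a"
proof -
  define a where "a = Min (range (\<lambda>i. min (y $ i) (1 - y $ i)))"
  have "a > 0"
    using Sset_coord_bounds[OF assms] by (simp add: a_def)
  moreover have "a \<le> y $ i \<and> y $ i \<le> 1 - a" for i
    using Min_le[of "range (\<lambda>i. min (y $ i) (1 - y $ i))" "min (y $ i) (1 - y $ i)"]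
    unfolding a_def by auto
  ultimately show ?thesis by blast
qed

lemma abs_coord_diff_le_dist: "\<bar>x $ i - y $ i\<bar> \<le> dist x (y::real^'n)"
  using component_le_norm_cart[of "x - y" i] by (simp add: dist_norm)

lemma abs_ypt_diff_le_dist: "\<bar>ypt x k - ypt y k\<bar> \<le> dist x (y::real^'n::{finite,linorder})"
  using abs_coord_diff_le_dist[of x "idx k" y] by (simp add: ypt_def)

lemma gap_mem_of_far_from_coords:
  assumes "j \<le> CARD('n)" "t \<in> {ypt x j..ypt x (j + 1)}" "\<forall>i. \<delta> \<le> \<bar>t - x $ i\<bar>" "dist x y < \<delta>"
  shows "t \<in> {ypt y j..ypt (y::real^'n::{finite,linorder}) (j + 1)}"
proof -
  have "ypt y j \<le> t"
  proof (cases "j = 0")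
    case False
    then have "ypt x j = x $ idx j"
      using assms(1) ypt_idx[of j x] by simp
    moreover have "\<delta> \<le> \<bar>t - x $ idx j\<bar>"
      using assms(3) by blast
    ultimately have "ypt x j + \<delta> \<le> t"
      using assms(2) by (simp add: abs_of_nonneg)
    then show ?thesis
      using abs_ypt_diff_le_dist[of x j y] assms(4) by linarith
  qed (use assms(2) in simp)
  moreover have "t \<le> ypt y (j + 1)"
  proof (cases "j = CARD('n)")
    case False
    then have "ypt x (j + 1) = x $ idx (j + 1)"
      using assms(1) ypt_idx[of "j + 1" x] by simp
    moreover have "\<delta> \<le> \<bar>t - x $ idx (j + 1)\<bar>"
      using assms(3) by blast
    ultimately have "t + \<delta> \<le> ypt x (j + 1)"
      using assms(2) by (simp add: abs_of_nonpos)
    then show ?thesis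
      using abs_ypt_diff_le_dist[of x "j + 1" y] assms(4) by linarith
  qed (use assms(2) in simp)
  ultimately show ?thesis by simp
qed

lemma mfun_ge: "t \<in> {ypt y j..ypt y (j + 1)} \<Longrightarrow> Ffun J K y t \<le> mfun J K j y"
  unfolding mfun_def by (rule SUP_upper)

lemma mfun_le: "(\<And>t. t \<in> {ypt y j..ypt y (j + 1)} \<Longrightarrow> Ffun J K y t \<le> c) \<Longrightarrow> mfun J K j y \<le> c"
  unfolding mfun_def by (rule SUP_least)

section \<open>Telescoping, weights and concave functions\<close>

lemma bij_betw_pos_pred: "bij_betw (\<lambda>i::'n::{finite,linorder}. pos i - 1) UNIV {..<CARD('n)}"
proof (rule bij_betw_imageI)
  have "strict_mono (\<lambda>i::'n. pos i - 1)"
    by (rule strict_monoI) (auto simp: pos_def intro!: psubset_card_mono)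
  then show inj: "inj (\<lambda>i::'n. pos i - 1)"
    by (rule strict_mono_imp_inj_on)
  have "card {j. j < i} < CARD('n)" for i :: 'n
    by (rule psubset_card_mono) auto
  then have "range (\<lambda>i::'n. pos i - 1) \<subseteq> {..<CARD('n)}"
    by (auto simp: pos_def)
  moreover have "card (range (\<lambda>i::'n. pos i - 1)) = card {..<CARD('n)}"
    using card_image[OF inj] by simp
  ultimately show "range (\<lambda>i::'n. pos i - 1) = {..<CARD('n)}"
    by (intro card_subset_eq) auto
qed

lemma pos_le_card: "pos (i::'n::{finite,linorder}) \<le> CARD('n)"
proof -
  have "pos i - 1 < CARD('n)"
    using bij_betwE[OF bij_betw_pos_pred[where 'n='n]] by blast
  then show ?thesis by (simp add: pos_def)
qed

lemma abs_diff_le_sum_abs_steps: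
  fixes r :: "nat \<Rightarrow> real"
  assumes "j \<le> l" "l \<le> N"
  shows "\<bar>r l - r j\<bar> \<le> (\<Sum>p<N. \<bar>r (Suc p) - r p\<bar>)"
proof -
  have "\<bar>r l - r j\<bar> = \<bar>\<Sum>p = j..<l. r (Suc p) - r p\<bar>"
    by (simp only: sum_Suc_diff'[OF assms(1)])
  also have "\<dots> \<le> (\<Sum>p = j..<l. \<bar>r (Suc p) - r p\<bar>)"
    by (rule sum_abs)
  also have "\<dots> \<le> (\<Sum>p<N. \<bar>r (Suc p) - r p\<bar>)"
    using assms by (intro sum_mono2) auto
  finally show ?thesis .
qed

lemma abs_mfun_diff_le_norm_Phi:
  assumes "j \<le> CARD('n)" "l \<le> CARD('n)"
  shows "\<bar>real_of_ereal (mfun J K l y) - real_of_ereal (mfun J K j y)\<bar>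
    \<le> real CARD('n) * norm (Phi J K (y::real^'n::{finite,linorder}))"
proof -
  define r where "r p = real_of_ereal (mfun J K p y)" for p
  have "\<bar>r l - r j\<bar> \<le> (\<Sum>p<CARD('n). \<bar>r (Suc p) - r p\<bar>)"
    using abs_diff_le_sum_abs_steps[of j l _ r] abs_diff_le_sum_abs_steps[of l j _ r] assms
    by (cases "j \<le> l") (auto simp: abs_minus_commute)
  also have "\<dots> = (\<Sum>i\<in>UNIV. \<bar>r (Suc (pos (i::'n) - 1)) - r (pos i - 1)\<bar>)"
    using sum.reindex_bij_betw[OF bij_betw_pos_pred[where 'n='n], of "\<lambda>p. \<bar>r (Suc p) - r p\<bar>"] by (rule sym)
  also have "\<dots> = (\<Sum>i\<in>UNIV. \<bar>Phi J K y $ i\<bar>)"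
    by (simp add: Phi_def r_def pos_def)
  also have "\<dots> \<le> (\<Sum>i\<in>(UNIV::'n set). norm (Phi J K y))"
    by (intro sum_mono component_le_norm_cart)
  finally show ?thesis by (simp add: r_def)
qed

lemma weight01_le_card:
  assumes "finite C" "Z \<inter> {0<..<1} \<subseteq> C" "0 \<in> Z \<or> 1 \<in> Z \<Longrightarrow> \<exists>c\<in>C. c \<notin> {0<..<1}"
  shows "weight01 Z \<le> ereal (card C)"
proof -
  have fin: "finite (Z \<inter> {0<..<1})"
    using assms(1,2) finite_subset by blast
  have interior: "card (Z \<inter> {0<..<1}) \<le> card (C \<inter> {0<..<1})"
    using assms(1,2) by (intro card_mono) auto
  have "real (card (Z \<inter> {0<..<1})) + (if 0 \<in> Z then 1/2 else 0) + (if 1 \<in> Z then 1/2 else 0)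
      \<le> real (card C)"
  proof (cases "0 \<in> Z \<or> 1 \<in> Z")
    case True
    then obtain c where c: "c \<in> C" "c \<notin> {0<..<1}" using assms(3) by blast
    have "card (insert c (C \<inter> {0<..<1})) \<le> card C"
      using c assms(1) by (intro card_mono) auto
    then have "card (C \<inter> {0<..<1}) + 1 \<le> card C"
      using c assms(1) by simp
    then show ?thesis using interior by simp
  next
    case False
    have "card (C \<inter> {0<..<1}) \<le> card C"
      using assms(1) by (intro card_mono) auto
    then show ?thesis using False interior by simp
  qed
  then show ?thesis using fin by (simp add: weight01_def)
qed

lemma concave_on_chord_le:
  fixes f :: "real \<Rightarrow> real"
  assumes "concave_on S f" "p \<in> S" "r \<in> S" "p < q" "q < r"
  shows "(r - q) * f p + (q - p) * f r \<le> (r - p) * f q"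
proof -
  define u where "u = (q - p) / (r - p)"
  have ur: "u * (r - p) = q - p"
    using assms(4,5) by (simp add: u_def)
  have u: "0 \<le> u" "u \<le> 1"
    using assms(4,5) by (auto simp: u_def field_simps)
  have "(1 - u) *\<^sub>R p + u *\<^sub>R r = q"
    using ur by (simp add: algebra_simps)
  have "(1 - u) * f p + u * f r \<le> f q"
    using concave_onD[OF assms(1) u assms(2,3)] \<open>(1 - u) *\<^sub>R p + u *\<^sub>R r = q\<close> by simp
  then have "(r - p) * ((1 - u) * f p + u * f r) \<le> (r - p) * f q"
    using assms(4,5) by (intro mult_left_mono) auto
  moreover have "(r - p) * ((1 - u) * f p + u * f r) = ((r - p) - u * (r - p)) * f p + u * (r - p) * f r"
    by (simp add: algebra_simps)
  then have "(r - p) * ((1 - u) * f p + u * f r) = (r - q) * f p + (q - p) * f r"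
    using ur by simp
  ultimately show ?thesis by simp
qed

lemma concave_on_bounded_above:
  fixes f :: "real \<Rightarrow> real"
  assumes "concave_on {a<..<b} f" "a < b"
  shows "\<exists>B. \<forall>t\<in>{a<..<b}. f t \<le> B"
proof -
  define c where "c = (a + b) / 2"
  define l where "l = (3 * a + b) / 4"
  define r where "r = (a + 3 * b) / 4"
  define X where "X = \<bar>f c\<bar> + \<bar>f l\<bar> + \<bar>f r\<bar>"
  have mem: "c \<in> {a<..<b}" "l \<in> {a<..<b}" "r \<in> {a<..<b}"
    using assms(2) by (auto simp: c_def l_def r_def)
  have quarter: "r - c = (b - a) / 4" "c - l = (b - a) / 4"
    by (simp_all add: c_def l_def r_def field_simps)
  have "l < c" "c < r"
    using assms(2) by (simp_all add: c_def l_def r_def)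
  have nonneg: "0 \<le> (b - a) * \<bar>f s\<bar>" for s
    using assms(2) by simp
  have "(b - a) / 4 * f t \<le> (b - a) / 4 * (4 * X)" if t: "t \<in> {a<..<b}" for t
  proof (cases t c rule: linorder_cases)
    case less
    have dist: "0 < r - t" "r - t \<le> b - a" "0 < c - t" "c - t \<le> b - a"
      using t less by (auto simp: c_def r_def field_simps)
    have "(r - c) * f t \<le> (r - t) * f c - (c - t) * f r"
      using concave_on_chord_le[OF assms(1) t mem(3) less \<open>c < r\<close>] by linarith
    also have "\<dots> \<le> (r - t) * \<bar>f c\<bar> + (c - t) * \<bar>f r\<bar>"
      using mult_left_mono[OF abs_ge_self less_imp_le[OF dist(1)], of "f c"]
        mult_left_mono[OF abs_ge_minus_self less_imp_le[OF dist(3)], of "f r"] by linarith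
    also have "\<dots> \<le> (b - a) * X"
      using mult_right_mono[OF dist(2) abs_ge_zero, of "f c"]
        mult_right_mono[OF dist(4) abs_ge_zero, of "f r"] nonneg[of l]
      unfolding X_def distrib_left by linarith
    finally show ?thesis using quarter by simp
  next
    case equal
    then show ?thesis using assms(2) by (simp add: X_def)
  next
    case greater
    have dist: "0 < t - l" "t - l \<le> b - a" "0 < t - c" "t - c \<le> b - a"
      using t greater by (auto simp: c_def l_def field_simps)
    have "(c - l) * f t \<le> (t - l) * f c - (t - c) * f l"
      using concave_on_chord_le[OF assms(1) mem(2) t \<open>l < c\<close> greater] by linarith
    also have "\<dots> \<le> (t - l) * \<bar>f c\<bar> + (t - c) * \<bar>f l\<bar>"
      using mult_left_mono[OF abs_ge_self less_imp_le[OF dist(1)], of "f c"]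
        mult_left_mono[OF abs_ge_minus_self less_imp_le[OF dist(3)], of "f l"] by linarith
    also have "\<dots> \<le> (b - a) * X"
      using mult_right_mono[OF dist(2) abs_ge_zero, of "f c"]
        mult_right_mono[OF dist(4) abs_ge_zero, of "f l"] nonneg[of r]
      unfolding X_def distrib_left by linarith
    finally show ?thesis using quarter by simp
  qed
  then have "\<forall>t\<in>{a<..<b}. f t \<le> 4 * X"
    using assms(2) by (simp add: mult.commute)
  then show ?thesis by blast
qed

section \<open>Singular kernels and the function F\<close>

definition kernel_domain :: "real set" where
  "kernel_domain = {-1<..<0} \<union> {0<..<1}"

lemma open_kernel_domain: "open kernel_domain"
  by (auto simp: kernel_domain_def)

lemma diff_mem_kernel_domain:
  "t \<in> {0..1} \<Longrightarrow> c \<in> {0<..<1} \<Longrightarrow> t \<noteq> c \<Longrightarrow> t - c \<in> kernel_domain"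
  by (auto simp: kernel_domain_def)

locale singular_field =
  fixes J :: "real \<Rightarrow> ereal" and K :: "'n::{finite,linorder} \<Rightarrow> real \<Rightarrow> ereal"
  assumes singular: "\<And>i. singular_kernel (K i)"
    and field: "n_field_function CARD('n) J"
begin

definition kr :: "'n \<Rightarrow> real \<Rightarrow> real" where
  "kr i s = real_of_ereal (K i s)"

text \<open>The real function that agrees with F where J is finite and t is not a node (\<open>F_eq_G\<close>).\<close>

definition G :: "real^'n::{finite,linorder} \<Rightarrow> real \<Rightarrow> real" where
  "G x t = real_of_ereal (J t) + (\<Sum>i\<in>UNIV. kr i (t - x $ i))"

lemma kernel_function_K: "kernel_function (K i)"
  using singular by (simp add: singular_kernel_def)

lemma K_0 [simp]: "K i 0 = -\<infinity>"
  using singular by (simp add: singular_kernel_def)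

lemma K_eq_kr: "s \<in> kernel_domain \<Longrightarrow> K i s = ereal (kr i s)"
  using kernel_function_K[of i]
  by (auto simp: kernel_function_def kr_def kernel_domain_def ereal_real')

lemma concave_on_kr: "concave_on {-1<..<0} (kr i)" "concave_on {0<..<1} (kr i)"
  using kernel_function_K[of i] by (simp_all add: kernel_function_def kr_def[abs_def])

lemma continuous_on_kr: "continuous_on kernel_domain (kr i)"
proof -
  have "continuous_on I (kr i)" if "open I" "concave_on I (kr i)" for I
    using convex_on_continuous[of I "\<lambda>s. - kr i s"] that continuous_on_minus[of I "\<lambda>s. - kr i s"]
    by (simp add: concave_on_def)
  then show ?thesis
    unfolding kernel_domain_def using concave_on_kr by (intro continuous_on_open_Un) auto
qed

lemma K_bounded_above: "\<exists>B. \<forall>i. \<forall>s\<in>{-1<..<1}. K i s \<le> ereal B"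
proof -
  have "\<exists>B. \<forall>s\<in>{-1<..<1}. K i s \<le> ereal B" for i
  proof -
    obtain B1 B2 where "\<forall>s\<in>{-1<..<0}. kr i s \<le> B1" "\<forall>s\<in>{0<..<1}. kr i s \<le> B2"
      using concave_on_bounded_above[OF concave_on_kr(1)] concave_on_bounded_above[OF concave_on_kr(2)]
      by fastforce
    then have "K i s \<le> ereal (max B1 B2)" if "s \<in> {-1<..<1}" for s
      using that K_eq_kr[of s i] by (cases s "0::real" rule: linorder_cases) (auto simp: kernel_domain_def le_max_iff_disj)
    then show ?thesis by blast
  qed
  then obtain B where B: "\<forall>s\<in>{-1<..<1}. K i s \<le> ereal (B i)" for i
    by metis
  have "K i s \<le> ereal (Max (range B))" if "s \<in> {-1<..<1}" for i s
    using B[of i] that Max_ge[of "range B" "B i"] order_trans by fastforce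
  then show ?thesis by blast
qed

lemma K_le_near_0: "\<exists>\<delta>>0. \<forall>i s. \<bar>s\<bar> < \<delta> \<longrightarrow> K i s \<le> ereal L"
proof -
  have "eventually (\<lambda>s. K i s < ereal L) (at 0)" for i
    using kernel_function_K[of i] order_tendstoD(2)[of "K i" "-\<infinity>" _ "ereal L"]
    by (auto simp: kernel_function_def eventually_at_split)
  then have "eventually (\<lambda>s. \<forall>i. K i s < ereal L) (at 0)"
    by (intro eventually_all_finite)
  then obtain \<delta> where \<delta>: "\<delta> > 0" "\<And>s. s \<noteq> 0 \<Longrightarrow> \<bar>s\<bar> < \<delta> \<Longrightarrow> \<forall>i. K i s < ereal L"
    unfolding eventually_at by auto
  have "K i s \<le> ereal L" if "\<bar>s\<bar> < \<delta>" for i s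
    using \<delta>(2)[OF _ that] by (cases "s = 0") (auto intro: less_imp_le)
  then show ?thesis using \<delta>(1) by blast
qed

lemma J_bounded_above: "\<exists>M. \<forall>t\<in>{0..1}. J t \<le> ereal M"
  using field by (simp add: n_field_function_def)

lemma sum_K_bounded_above: "\<exists>R. \<forall>x\<in>Sset. \<forall>t\<in>{0..1}. \<forall>I. (\<Sum>i\<in>I. K i (t - x $ i)) \<le> ereal R"
proof -
  obtain B where B: "\<forall>i. \<forall>s\<in>{-1<..<1}. K i s \<le> ereal B"
    using K_bounded_above by blast
  have "(\<Sum>i\<in>I. K i (t - x $ i)) \<le> ereal (real CARD('n) * \<bar>B\<bar>)"
    if "x \<in> Sset" "t \<in> {0..1}" for x t and I :: "'n set"
  proof -
    have "t - x $ i \<in> {-1<..<1}" for i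
      using that Sset_coord_bounds[of x i] by auto
    then have "(\<Sum>i\<in>I. K i (t - x $ i)) \<le> (\<Sum>i\<in>I. ereal \<bar>B\<bar>)"
      using B by (intro sum_mono) (meson abs_ge_self ereal_less_eq(3) order_trans)
    also have "\<dots> = ereal (real (card I) * \<bar>B\<bar>)"
      by (simp add: sum_ereal)
    also have "\<dots> \<le> ereal (real CARD('n) * \<bar>B\<bar>)"
      using card_mono[of UNIV I] by (simp add: mult_right_mono)
    finally show ?thesis .
  qed
  then show ?thesis by blast
qed

lemma F_bounded_above: "\<exists>M. \<forall>x\<in>Sset. \<forall>t\<in>{0..1}. Ffun J K x t \<le> ereal M"
proof -
  obtain M R where "\<forall>t\<in>{0..1}. J t \<le> ereal M"
    and "\<forall>x\<in>Sset. \<forall>t\<in>{0..1}. \<forall>I. (\<Sum>i\<in>I. K i (t - x $ i)) \<le> ereal R"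
    using J_bounded_above sum_K_bounded_above by blast
  then have "Ffun J K x t \<le> ereal (M + R)" if "x \<in> Sset" "t \<in> {0..1}" for x t
    using that unfolding Ffun_def by (metis add_mono plus_ereal.simps(1))
  then show ?thesis by blast
qed

lemma F_le_near_coord:
  "\<exists>\<delta>>0. \<forall>x\<in>Sset. \<forall>t\<in>{0..1}. \<forall>i. \<bar>t - x $ i\<bar> < \<delta> \<longrightarrow> Ffun J K x t \<le> ereal L"
proof -
  obtain M R where M: "\<forall>t\<in>{0..1}. J t \<le> ereal M"
    and R: "\<forall>x\<in>Sset. \<forall>t\<in>{0..1}. \<forall>I. (\<Sum>i\<in>I. K i (t - x $ i)) \<le> ereal R"
    using J_bounded_above sum_K_bounded_above by blast
  obtain \<delta> where \<delta>: "\<delta> > 0" "\<forall>i s. \<bar>s\<bar> < \<delta> \<longrightarrow> K i s \<le> ereal (L - M - R)"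
    using K_le_near_0 by blast
  have "Ffun J K x t \<le> ereal L" if "x \<in> Sset" "t \<in> {0..1}" "\<bar>t - x $ i\<bar> < \<delta>" for x t i
  proof -
    have "Ffun J K x t = J t + (K i (t - x $ i) + (\<Sum>j\<in>UNIV - {i}. K j (t - x $ j)))"
      unfolding Ffun_def by (simp add: sum.remove)
    also have "\<dots> \<le> ereal M + (ereal (L - M - R) + ereal R)"
      using M R \<delta>(2) that by (intro add_mono) auto
    also have "\<dots> = ereal L"
      by simp
    finally show ?thesis .
  qed
  then show ?thesis using \<delta>(1) by blast
qed

lemma F_eq_G:
  assumes "t \<in> {0..1}" "J t \<noteq> -\<infinity>" "\<forall>i. t - x $ i \<in> kernel_domain"
  shows "Ffun J K x t = ereal (G x t)"
proof -
  obtain M where "J t \<le> ereal M"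
    using J_bounded_above assms(1) by blast
  then have "J t = ereal (real_of_ereal (J t))"
    using assms(2) by (cases "J t") auto
  moreover have "(\<Sum>i\<in>UNIV. K i (t - x $ i)) = ereal (\<Sum>i\<in>UNIV. kr i (t - x $ i))"
    using assms(3) by (simp add: K_eq_kr sum_ereal)
  ultimately show ?thesis
    unfolding Ffun_def G_def by (metis plus_ereal.simps(1))
qed

lemma F_neq_neginf_iff:
  assumes "x \<in> Sset" "t \<in> {0..1}"
  shows "Ffun J K x t \<noteq> -\<infinity> \<longleftrightarrow> J t \<noteq> -\<infinity> \<and> (\<forall>i. t \<noteq> x $ i)"
proof
  assume F: "Ffun J K x t \<noteq> -\<infinity>"
  obtain R where "(\<Sum>i\<in>UNIV. K i (t - x $ i)) \<le> ereal R"
    using sum_K_bounded_above assms by blast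
  then have "J t \<noteq> -\<infinity>"
    using F unfolding Ffun_def by (cases "\<Sum>i\<in>UNIV. K i (t - x $ i)") auto
  moreover have "t \<noteq> x $ i" for i
  proof
    assume "t = x $ i"
    have "Ffun J K x t \<le> ereal B" for B
    proof -
      obtain \<delta> where "\<delta> > 0" "\<forall>x\<in>Sset. \<forall>t\<in>{0..1}. \<forall>i. \<bar>t - x $ i\<bar> < \<delta> \<longrightarrow> Ffun J K x t \<le> ereal B"
        using F_le_near_coord by blast
      moreover have "\<bar>t - x $ i\<bar> < \<delta>"
        using \<open>\<delta> > 0\<close> \<open>t = x $ i\<close> by simp
      ultimately show ?thesis
        using assms by blast
    qed
    then show False
      using F ereal_bot by blast
  qed
  ultimately show "J t \<noteq> -\<infinity> \<and> (\<forall>i. t \<noteq> x $ i)" by blast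
next
  assume "J t \<noteq> -\<infinity> \<and> (\<forall>i. t \<noteq> x $ i)"
  then show "Ffun J K x t \<noteq> -\<infinity>"
    using F_eq_G[OF assms(2)] diff_mem_kernel_domain[OF assms(2)] Sset_coord_bounds[OF assms(1)]
    by auto
qed

lemma tendsto_G:
  assumes "(f \<longlongrightarrow> y) F" "\<forall>i. t - y $ i \<in> kernel_domain"
  shows "((\<lambda>z. G (f z) t) \<longlongrightarrow> G y t) F"
proof -
  have "isCont (kr i) (t - y $ i)" for i
    using continuous_on_kr[of i] open_kernel_domain assms(2)
    by (simp add: continuous_on_eq_continuous_at)
  then have "((\<lambda>z. kr i (t - f z $ i)) \<longlongrightarrow> kr i (t - y $ i)) F" for i
    using isCont_tendsto_compose tendsto_diff[OF tendsto_const tendsto_vec_nth[OF assms(1)]] by blast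
  then show ?thesis
    unfolding G_def by (intro tendsto_add tendsto_const tendsto_sum) auto
qed

lemma eventually_F_eq_G:
  assumes "(f \<longlongrightarrow> y) F" "t \<in> {0..1}" "J t \<noteq> -\<infinity>" "\<forall>i. t - y $ i \<in> kernel_domain"
  shows "eventually (\<lambda>z. Ffun J K (f z) t = ereal (G (f z) t)) F"
proof -
  have "eventually (\<lambda>z. t - f z $ i \<in> kernel_domain) F" for i
    using topological_tendstoD[OF tendsto_diff[OF tendsto_const tendsto_vec_nth[OF assms(1)]]]
      open_kernel_domain assms(4) by blast
  then have "eventually (\<lambda>z. \<forall>i. t - f z $ i \<in> kernel_domain) F"
    by (intro eventually_all_finite)
  then show ?thesis
    by eventually_elim (use F_eq_G assms(2,3) in blast)
qed

lemma G_uniformly_close: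
  assumes "compact Q" "Q \<subseteq> kernel_domain" "e > 0"
  shows "\<exists>\<rho>>0. \<forall>x y t. dist x y < \<rho> \<longrightarrow> (\<forall>i. t - x $ i \<in> Q \<and> t - y $ i \<in> Q)
    \<longrightarrow> \<bar>G x t - G y t\<bar> \<le> e"
proof -
  define e' where "e' = e / real CARD('n)"
  have "e' > 0"
    using assms(3) by (simp add: e'_def)
  have "\<exists>\<rho>>0. \<forall>s\<in>Q. \<forall>s'\<in>Q. \<bar>s' - s\<bar> < \<rho> \<longrightarrow> \<bar>kr i s' - kr i s\<bar> < e'" for i
    using compact_uniformly_continuous[OF continuous_on_subset[OF continuous_on_kr assms(2)] assms(1)]
      \<open>e' > 0\<close>
    unfolding uniformly_continuous_on_def dist_real_def by blast
  then obtain \<rho> where \<rho>: "\<And>i. \<rho> i > 0"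
    "\<And>i. \<forall>s\<in>Q. \<forall>s'\<in>Q. \<bar>s' - s\<bar> < \<rho> i \<longrightarrow> \<bar>kr i s' - kr i s\<bar> < e'"
    by metis
  define \<rho>0 where "\<rho>0 = Min (range \<rho>)"
  have "\<rho>0 > 0"
    using \<rho>(1) by (simp add: \<rho>0_def)
  have "\<bar>G x t - G y t\<bar> \<le> e" if xy: "dist x y < \<rho>0" "\<forall>i. t - x $ i \<in> Q \<and> t - y $ i \<in> Q" for x y t
  proof -
    have close: "\<bar>kr i (t - x $ i) - kr i (t - y $ i)\<bar> \<le> e'" for i
    proof -
      have "\<bar>(t - x $ i) - (t - y $ i)\<bar> \<le> dist x y"
        using component_le_norm_cart[of "y - x" i] by (simp add: dist_norm norm_minus_commute)
      moreover have "dist x y < \<rho> i"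
        using xy(1) Min_le[of "range \<rho>" "\<rho> i"] by (simp add: \<rho>0_def)
      ultimately have "\<bar>(t - x $ i) - (t - y $ i)\<bar> < \<rho> i"
        by linarith
      then show ?thesis
        using \<rho>(2)[of i] xy(2) by (meson less_imp_le)
    qed
    have "\<bar>G x t - G y t\<bar> = \<bar>\<Sum>i\<in>UNIV. kr i (t - x $ i) - kr i (t - y $ i)\<bar>"
      by (simp add: G_def sum_subtractf)
    also have "\<dots> \<le> (\<Sum>i\<in>UNIV. \<bar>kr i (t - x $ i) - kr i (t - y $ i)\<bar>)"
      by (rule sum_abs)
    also have "\<dots> \<le> (\<Sum>i\<in>(UNIV::'n set). e')"
      by (intro sum_mono close)
    also have "\<dots> = e"
      by (simp add: e'_def)
    finally show ?thesis .
  qed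
  then show ?thesis
    using \<open>\<rho>0 > 0\<close> by blast
qed

section \<open>Semicontinuity of the maxima m_j\<close>

lemma mfun_eq_ereal:
  assumes "x \<in> Yset J K" "j \<le> CARD('n)"
  shows "mfun J K j x = ereal (real_of_ereal (mfun J K j x))"
proof -
  have xS: "x \<in> Sset"
    using assms(1) by (simp add: Yset_def)
  obtain M where M: "\<forall>x\<in>Sset. \<forall>t\<in>{0..1}. Ffun J K x t \<le> ereal M"
    using F_bounded_above by blast
  have "mfun J K j x \<le> ereal M"
  proof (rule mfun_le)
    fix t assume "t \<in> {ypt x j..ypt x (j + 1)}"
    then show "Ffun J K x t \<le> ereal M"
      using M xS gap_subset_01[OF xS assms(2)] by blast
  qed
  then show ?thesis
    using assms by (cases "mfun J K j x") (auto simp: Yset_def)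
qed

lemma mfun_lower_semicontinuous:
  assumes "y \<in> Sset" "j \<le> CARD('n)" "c < mfun J K j y"
  shows "\<forall>\<^sub>F x in nhds y. c < mfun J K j x"
proof -
  obtain t where t: "t \<in> {ypt y j..ypt y (j + 1)}" "c < Ffun J K y t"
    using assms(3) unfolding mfun_def less_SUP_iff by blast
  have t01: "t \<in> {0..1}"
    using gap_subset_01 assms(1,2) t(1) by blast
  have Jt: "J t \<noteq> -\<infinity>" and off: "\<forall>i. t \<noteq> y $ i"
    using F_neq_neginf_iff[OF assms(1) t01] t(2) by auto
  have dom: "\<forall>i. t - y $ i \<in> kernel_domain"
    using diff_mem_kernel_domain[OF t01] Sset_coord_bounds[OF assms(1)] off by auto
  have "c < ereal (G y t)"
    using t(2) F_eq_G[OF t01 Jt dom] by simp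
  then have "\<forall>\<^sub>F x in nhds y. c < ereal (G x t)"
    using order_tendstoD(1)[OF tendsto_ereal[OF tendsto_G[OF filterlim_ident dom]]] by blast
  moreover have "\<forall>\<^sub>F x in nhds y. gap_point x j t"
    using gap_point_iff[OF assms(1,2)] t(1) off by (intro eventually_gap_point[OF _ filterlim_ident]) blast
  moreover note eventually_F_eq_G[OF filterlim_ident t01 Jt dom]
  ultimately show ?thesis
  proof eventually_elim
    case (elim x)
    then show ?case
      using mfun_ge[OF gap_point_mem[OF assms(2)], where J = J and K = K] by (metis order_less_le_trans)
  qed
qed

lemma F_le_of_far_from_nodes:
  assumes "y \<in> Sset" "\<delta> > 0" "e > 0"
  shows "\<exists>r>0. \<forall>x t. dist x y < r \<longrightarrow> t \<in> {0..1} \<longrightarrow> J t \<noteq> -\<infinity> \<longrightarrow> (\<forall>i. \<delta> \<le> \<bar>t - x $ i\<bar>)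
    \<longrightarrow> Ffun J K x t \<le> Ffun J K y t + ereal e"
proof -
  obtain a where a: "a > 0" "\<forall>i. a \<le> y $ i \<and> y $ i \<le> 1 - a"
    using Sset_margin[OF assms(1)] by blast
  txt \<open>For x close to y, all kernel arguments of x and y stay in the compact set Q.\<close>
  define Q where "Q = {-1 + a/2 .. -\<delta>/2} \<union> {\<delta>/2 .. 1 - a/2}"
  have "compact Q" "Q \<subseteq> kernel_domain"
    using a(1) assms(2) by (auto simp: Q_def kernel_domain_def compact_Un)
  then obtain \<rho> where \<rho>: "\<rho> > 0"
    "\<forall>x y t. dist x y < \<rho> \<longrightarrow> (\<forall>i. t - x $ i \<in> Q \<and> t - y $ i \<in> Q) \<longrightarrow> \<bar>G x t - G y t\<bar> \<le> e"
    using G_uniformly_close assms(3) by blast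
  have "Ffun J K x t \<le> Ffun J K y t + ereal e"
    if x: "dist x y < min \<rho> (min (\<delta>/2) (a/2))" and t: "t \<in> {0..1}" "J t \<noteq> -\<infinity>"
      and far: "\<forall>i. \<delta> \<le> \<bar>t - x $ i\<bar>" for x t
  proof -
    have inQ: "t - c \<in> Q" if "a/2 \<le> c" "c \<le> 1 - a/2" "\<delta>/2 \<le> \<bar>t - c\<bar>" for c
      using t(1) that by (cases "0 \<le> t - c") (simp_all add: Q_def)
    have close: "\<bar>x $ i - y $ i\<bar> < \<delta>/2" "\<bar>x $ i - y $ i\<bar> < a/2" for i
      using abs_coord_diff_le_dist[of x i y] x by linarith+
    have Q: "t - x $ i \<in> Q" "t - y $ i \<in> Q" for i
    proof -
      have "\<delta>/2 \<le> \<bar>t - y $ i\<bar>"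
        using far[rule_format, of i] close(1)[of i] abs_triangle_ineq[of "t - y $ i" "y $ i - x $ i"]
        by (simp add: abs_minus_commute)
      moreover have "a/2 \<le> x $ i" "x $ i \<le> 1 - a/2" "a/2 \<le> y $ i" "y $ i \<le> 1 - a/2"
        using abs_less_iff[THEN iffD1, OF close(2)[of i]] a(2)[rule_format, of i] by linarith+
      moreover have "\<delta> \<le> \<bar>t - x $ i\<bar>"
        using far by blast
      then have "\<delta>/2 \<le> \<bar>t - x $ i\<bar>"
        using assms(2) by linarith
      ultimately show "t - x $ i \<in> Q" "t - y $ i \<in> Q"
        by (simp_all add: inQ)
    qed
    have dom: "\<forall>i. t - x $ i \<in> kernel_domain" "\<forall>i. t - y $ i \<in> kernel_domain"
      using Q \<open>Q \<subseteq> kernel_domain\<close> by blast+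
    have "\<bar>G x t - G y t\<bar> \<le> e"
      using \<rho>(2) x Q by simp
    then have "G x t \<le> G y t + e"
      using abs_le_D1 by fastforce
    then show ?thesis
      using F_eq_G[OF t dom(1)] F_eq_G[OF t dom(2)] by simp
  qed
  then show ?thesis
    using \<rho>(1) assms(2) a(1) by (intro exI[of _ "min \<rho> (min (\<delta>/2) (a/2))"]) auto
qed

lemma mfun_upper_semicontinuous:
  assumes "y \<in> Sset" "j \<le> CARD('n)" "mfun J K j y < ereal \<beta>"
  shows "\<forall>\<^sub>F x in nhds y. x \<in> Sset \<longrightarrow> mfun J K j x < ereal \<beta>"
proof -
  obtain \<mu> where \<mu>: "mfun J K j y < ereal \<mu>" "\<mu> < \<beta>"
    using ereal_dense2[OF assms(3)] by auto
  define \<eta> where "\<eta> = (\<beta> - \<mu>) / 2"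
  have "\<eta> > 0" "\<mu> + \<eta> < \<beta>"
    using \<mu>(2) by (simp_all add: \<eta>_def field_simps)
  obtain \<delta> where \<delta>: "\<delta> > 0"
    "\<forall>x\<in>Sset. \<forall>t\<in>{0..1}. \<forall>i. \<bar>t - x $ i\<bar> < \<delta> \<longrightarrow> Ffun J K x t \<le> ereal \<mu>"
    using F_le_near_coord by blast
  obtain r where r: "r > 0" "\<forall>x t. dist x y < r \<longrightarrow> t \<in> {0..1} \<longrightarrow> J t \<noteq> -\<infinity>
      \<longrightarrow> (\<forall>i. \<delta> \<le> \<bar>t - x $ i\<bar>) \<longrightarrow> Ffun J K x t \<le> Ffun J K y t + ereal \<eta>"
    using F_le_of_far_from_nodes[OF assms(1) \<delta>(1) \<open>\<eta> > 0\<close>] by blast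
  have "mfun J K j x < ereal \<beta>" if x: "x \<in> Sset" "dist x y < min r \<delta>" for x
  proof -
    have "Ffun J K x t \<le> ereal (\<mu> + \<eta>)" if t: "t \<in> {ypt x j..ypt x (j + 1)}" for t
    proof -
      have t01: "t \<in> {0..1}"
        using gap_subset_01 x(1) assms(2) t by blast
      show ?thesis
      proof (cases "\<exists>i. \<bar>t - x $ i\<bar> < \<delta>")
        case True
        then have "Ffun J K x t \<le> ereal \<mu>"
          using \<delta>(2) x(1) t01 by blast
        also have "\<dots> \<le> ereal (\<mu> + \<eta>)"
          using \<open>\<eta> > 0\<close> by simp
        finally show ?thesis .
      next
        case False
        then have far: "\<forall>i. \<delta> \<le> \<bar>t - x $ i\<bar>"
          by (simp add: not_less)
        show ?thesis
        proof (cases "J t = -\<infinity>")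
          case True
          then show ?thesis
            using F_neq_neginf_iff[OF x(1) t01] by simp
        next
          case False
          have "dist x y < r" "dist x y < \<delta>"
            using x(2) by simp_all
          then have "t \<in> {ypt y j..ypt y (j + 1)}"
            using gap_mem_of_far_from_coords[OF assms(2) t far] by blast
          then have "Ffun J K y t \<le> mfun J K j y"
            by (rule mfun_ge)
          then have "Ffun J K y t \<le> ereal \<mu>"
            using less_imp_le[OF \<mu>(1)] by (rule order_trans)
          have "Ffun J K x t \<le> Ffun J K y t + ereal \<eta>"
            using r(2) \<open>dist x y < r\<close> t01 False far by blast
          also have "\<dots> \<le> ereal \<mu> + ereal \<eta>"
            using \<open>Ffun J K y t \<le> ereal \<mu>\<close> by (rule add_right_mono)
          finally show ?thesis
            by simp
        qed
      qed
    qed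
    then have "mfun J K j x \<le> ereal (\<mu> + \<eta>)"
      by (rule mfun_le)
    also have "\<dots> < ereal \<beta>"
      using \<open>\<mu> + \<eta> < \<beta>\<close> by simp
    finally show ?thesis .
  qed
  moreover have "\<forall>\<^sub>F x in nhds y. dist x y < min r \<delta>"
    using r(1) \<delta>(1) unfolding eventually_nhds_metric by (intro exI[of _ "min r \<delta>"]) auto
  ultimately show ?thesis
    by (auto elim: eventually_mono)
qed

lemma open_Yset: "open (Yset J K)"
  unfolding open_subopen[of "Yset J K"]
proof
  fix y assume y: "y \<in> Yset J K"
  have "\<forall>\<^sub>F x in nhds y. x \<in> Sset"
    using open_Sset y by (intro eventually_nhds_in_open) (auto simp: Yset_def)
  moreover have "\<forall>\<^sub>F x in nhds y. \<forall>j\<in>{..CARD('n)}. -\<infinity> < mfun J K j x"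
    using y by (intro eventually_ball_finite ballI mfun_lower_semicontinuous) (auto simp: Yset_def)
  ultimately have "\<forall>\<^sub>F x in nhds y. x \<in> Yset J K"
    by eventually_elim (auto simp: Yset_def)
  then show "\<exists>T. open T \<and> y \<in> T \<and> T \<subseteq> Yset J K"
    unfolding eventually_nhds by blast
qed

lemma tendsto_mfun:
  assumes "y \<in> Yset J K" "j \<le> CARD('n)"
  shows "(mfun J K j \<longlongrightarrow> mfun J K j y) (nhds y)"
proof (rule order_tendstoI)
  have yS: "y \<in> Sset"
    using assms(1) by (simp add: Yset_def)
  show "\<forall>\<^sub>F x in nhds y. c < mfun J K j x" if "c < mfun J K j y" for c
    using mfun_lower_semicontinuous[OF yS assms(2) that] .
  have upper: "\<forall>\<^sub>F x in nhds y. mfun J K j x < ereal \<beta>" if "mfun J K j y < ereal \<beta>" for \<beta>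
    using mfun_upper_semicontinuous[OF yS assms(2) that] eventually_nhds_in_open[OF open_Sset yS]
    by eventually_elim blast
  show "\<forall>\<^sub>F x in nhds y. mfun J K j x < c" if "mfun J K j y < c" for c
  proof (cases c)
    case PInf
    obtain r where "mfun J K j y = ereal r"
      using mfun_eq_ereal[OF assms] by blast
    then have "\<forall>\<^sub>F x in nhds y. mfun J K j x < ereal (r + 1)"
      by (intro upper) simp
    then show ?thesis
      by (rule eventually_mono) (metis PInf ereal_less_PInfty less_trans)
  qed (use that upper in auto)
qed

lemma tendsto_Phi:
  assumes "y \<in> Yset J K"
  shows "(Phi J K \<longlongrightarrow> Phi J K y) (nhds y)"
proof (rule vec_tendstoI)
  have m: "((\<lambda>x. real_of_ereal (mfun J K p x)) \<longlongrightarrow> real_of_ereal (mfun J K p y)) (nhds y)"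
    if "p \<le> CARD('n)" for p
    using tendsto_mfun[OF assms that] mfun_eq_ereal[OF assms that] by (metis lim_real_of_ereal)
  fix i
  show "((\<lambda>x. Phi J K x $ i) \<longlongrightarrow> Phi J K y $ i) (nhds y)"
    unfolding Phi_def using pos_le_card[of i] by (auto intro!: tendsto_diff m)
qed

section \<open>Behaviour at the boundary of the regularity set\<close>

lemma mfun_le_of_short_gap:
  "\<exists>\<delta>>0. \<forall>x\<in>Sset. \<forall>j\<le>CARD('n). ypt x (j + 1) - ypt x j < \<delta> \<longrightarrow> mfun J K j x \<le> ereal L"
proof -
  obtain \<delta> where \<delta>: "\<delta> > 0" "\<forall>x\<in>Sset. \<forall>t\<in>{0..1}. \<forall>i. \<bar>t - x $ i\<bar> < \<delta> \<longrightarrow> Ffun J K x t \<le> ereal L"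
    using F_le_near_coord by blast
  have "mfun J K j x \<le> ereal L"
    if x: "x \<in> Sset" "j \<le> CARD('n)" "ypt x (j + 1) - ypt x j < \<delta>" for x j
  proof (rule mfun_le)
    fix t assume t: "t \<in> {ypt x j..ypt x (j + 1)}"
    txt \<open>Since n \<ge> 1, one endpoint of every gap is a node.\<close>
    define k where "k = (if j = 0 then 1 else j)"
    have k: "k \<in> {1..CARD('n)}" "k = j \<or> k = j + 1"
      using x(2) by (auto simp: k_def)
    then have "\<bar>t - x $ idx k\<bar> < \<delta>"
      using t x(3) ypt_idx[OF k(1), of x] by (auto simp: abs_less_iff)
    then show "Ffun J K x t \<le> ereal L"
      using \<delta>(2) x(1) gap_subset_01[OF x(1,2)] t by blast
  qed
  then show ?thesis
    using \<delta>(1) by blast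
qed

lemma mfun_tendsto_neginf_of_gap_collapse:
  assumes "\<forall>k. x k \<in> Sset" "x \<longlonglongrightarrow> y" "j \<le> CARD('n)" "ypt y (j + 1) \<le> ypt y j"
  shows "((\<lambda>k. mfun J K j (x k)) \<longlongrightarrow> -\<infinity>) sequentially"
  unfolding tendsto_MInfty
proof
  fix r
  obtain \<delta> where \<delta>: "\<delta> > 0"
    "\<forall>x\<in>Sset. \<forall>j\<le>CARD('n). ypt x (j + 1) - ypt x j < \<delta> \<longrightarrow> mfun J K j x \<le> ereal (r - 1)"
    using mfun_le_of_short_gap by blast
  have "((\<lambda>k. ypt (x k) (j + 1) - ypt (x k) j) \<longlongrightarrow> ypt y (j + 1) - ypt y j) sequentially"
    using assms(2) by (intro tendsto_diff tendsto_ypt)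
  moreover have "ypt y (j + 1) - ypt y j < \<delta>"
    using assms(4) \<delta>(1) by simp
  ultimately have "\<forall>\<^sub>F k in sequentially. ypt (x k) (j + 1) - ypt (x k) j < \<delta>"
    by (rule order_tendstoD(2))
  then show "\<forall>\<^sub>F k in sequentially. mfun J K j (x k) < ereal r"
  proof eventually_elim
    case (elim k)
    then have "mfun J K j (x k) \<le> ereal (r - 1)"
      using \<delta>(2) assms(1,3) by blast
    also have "\<dots> < ereal r"
      by simp
    finally show ?case .
  qed
qed

lemma mfun_tendsto_neginf_of_neginf_limit:
  assumes "\<forall>k. x k \<in> Sset" "x \<longlonglongrightarrow> y" "y \<in> Sset" "j \<le> CARD('n)" "mfun J K j y = -\<infinity>"
  shows "((\<lambda>k. mfun J K j (x k)) \<longlongrightarrow> -\<infinity>) sequentially"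
  unfolding tendsto_MInfty
proof
  fix r
  have "\<forall>\<^sub>F z in nhds y. z \<in> Sset \<longrightarrow> mfun J K j z < ereal r"
    using mfun_upper_semicontinuous[OF assms(3,4)] assms(5) by simp
  then have "\<forall>\<^sub>F k in sequentially. x k \<in> Sset \<longrightarrow> mfun J K j (x k) < ereal r"
    using filterlim_iff[THEN iffD1, OF assms(2)] by blast
  then show "\<forall>\<^sub>F k in sequentially. mfun J K j (x k) < ereal r"
    by (rule eventually_mono) (use assms(1) in blast)
qed

lemma mfun_tendsto_neginf_at_boundary:
  assumes "\<forall>k. x k \<in> Yset J K" "x \<longlonglongrightarrow> y" "y \<notin> Yset J K"
  shows "\<exists>j\<le>CARD('n). ((\<lambda>k. mfun J K j (x k)) \<longlongrightarrow> -\<infinity>) sequentially"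
proof -
  have xS: "\<forall>k. x k \<in> Sset"
    using assms(1) by (simp add: Yset_def)
  show ?thesis
  proof (cases "y \<in> Sset")
    case True
    then obtain j where "j \<le> CARD('n)" "mfun J K j y = -\<infinity>"
      using assms(3) by (auto simp: Yset_def)
    then show ?thesis
      using mfun_tendsto_neginf_of_neginf_limit[OF xS assms(2) True] by blast
  next
    case False
    then obtain j where "j \<le> CARD('n)" "ypt y (j + 1) \<le> ypt y j"
      by (auto simp: Sset_def not_less)
    then show ?thesis
      using mfun_tendsto_neginf_of_gap_collapse[OF xS assms(2)] by blast
  qed
qed

lemma exists_regular_point:
  assumes "\<forall>i. (y::real^'n::{finite,linorder}) $ i \<in> {0..1}"
  shows "\<exists>t\<in>{0..1}. J t \<noteq> -\<infinity> \<and> (\<forall>i. t - y $ i \<in> kernel_domain)"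
proof (rule ccontr)
  assume none: "\<not> ?thesis"
  define Z where "Z = {t\<in>{0..1}. J t \<noteq> -\<infinity>}"
  have off: "\<exists>i. t - y $ i \<notin> kernel_domain" if "t \<in> Z" for t
    using none that by (auto simp: Z_def)
  have "weight01 Z \<le> ereal (card (range (\<lambda>i. y $ i)))"
  proof (rule weight01_le_card)
    show "Z \<inter> {0<..<1} \<subseteq> range (\<lambda>i. y $ i)"
    proof
      fix t assume t: "t \<in> Z \<inter> {0<..<1}"
      then obtain i where "t - y $ i \<notin> kernel_domain"
        using off by blast
      then have "t = y $ i"
        using t assms[rule_format, of i] by (auto simp: kernel_domain_def)
      then show "t \<in> range (\<lambda>i. y $ i)" by blast
    qed
    show "\<exists>c\<in>range (\<lambda>i. y $ i). c \<notin> {0<..<1}" if endpoint: "0 \<in> Z \<or> 1 \<in> Z"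
    proof -
      obtain t where t: "t \<in> Z" "t = 0 \<or> t = 1"
        using endpoint by blast
      then obtain i where "t - y $ i \<notin> kernel_domain"
        using off by blast
      then have "y $ i \<notin> {0<..<1}"
        using t(2) by (auto simp: kernel_domain_def)
      then show ?thesis by blast
    qed
  qed simp
  also have "\<dots> \<le> ereal (real CARD('n))"
    using card_image_le[of UNIV "\<lambda>i. y $ i"] by simp
  finally have "weight01 Z \<le> ereal (real CARD('n))" .
  moreover have "ereal (real CARD('n)) < weight01 Z"
    using field by (simp add: n_field_function_def Z_def)
  ultimately show False
    by simp
qed

lemma mfun_max_bounded_below:
  assumes "\<forall>k. x k \<in> Sset" "x \<longlonglongrightarrow> y"
  shows "\<exists>L. \<forall>\<^sub>F k in sequentially. \<exists>l\<le>CARD('n). ereal L \<le> mfun J K l (x k)"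
proof -
  have "y $ i \<in> {0..1}" for i
    using Sset_coord_bounds[OF assms(1)[rule_format]]
    by (intro closed_sequentially[OF closed_atLeastAtMost _ tendsto_vec_nth[OF assms(2)]]) (simp add: less_imp_le)
  then obtain t where t: "t \<in> {0..1}" "J t \<noteq> -\<infinity>" "\<forall>i. t - y $ i \<in> kernel_domain"
    using exists_regular_point by blast
  have "\<forall>\<^sub>F k in sequentially. G y t - 1 < G (x k) t"
    using order_tendstoD(1)[OF tendsto_G[OF assms(2) t(3)]] by simp
  moreover note eventually_F_eq_G[OF assms(2) t]
  ultimately have "\<forall>\<^sub>F k in sequentially. \<exists>l\<le>CARD('n). ereal (G y t - 1) \<le> mfun J K l (x k)"
  proof eventually_elim
    case (elim k)
    obtain l where l: "l \<le> CARD('n)" "t \<in> {ypt (x k) l..ypt (x k) (l + 1)}"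
      using ex_gap_mem assms(1) t(1) by blast
    have "ereal (G y t - 1) \<le> Ffun J K (x k) t"
      using elim by simp
    also have "\<dots> \<le> mfun J K l (x k)"
      using l(2) by (rule mfun_ge)
    finally show ?case
      using l(1) by blast
  qed
  then show ?thesis by blast
qed

lemma norm_Phi_tendsto_at_boundary:
  assumes "\<forall>k. x k \<in> Yset J K" "x \<longlonglongrightarrow> y" "y \<notin> Yset J K"
  shows "filterlim (\<lambda>k. norm (Phi J K (x k))) at_top sequentially"
  unfolding filterlim_at_top
proof
  fix Z :: real
  have xS: "\<forall>k. x k \<in> Sset"
    using assms(1) by (simp add: Yset_def)
  obtain j where j: "j \<le> CARD('n)" "((\<lambda>k. mfun J K j (x k)) \<longlongrightarrow> -\<infinity>) sequentially"
    using mfun_tendsto_neginf_at_boundary[OF assms] by blast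
  obtain L where "\<forall>\<^sub>F k in sequentially. \<exists>l\<le>CARD('n). ereal L \<le> mfun J K l (x k)"
    using mfun_max_bounded_below[OF xS assms(2)] by blast
  moreover have "\<forall>\<^sub>F k in sequentially. mfun J K j (x k) < ereal (L - real CARD('n) * \<bar>Z\<bar>)"
    using j(2) by (simp add: tendsto_MInfty)
  ultimately show "\<forall>\<^sub>F k in sequentially. Z \<le> norm (Phi J K (x k))"
  proof eventually_elim
    case (elim k)
    then obtain l where l: "l \<le> CARD('n)" "ereal L \<le> mfun J K l (x k)"
      by blast
    define a b where "a = real_of_ereal (mfun J K l (x k))" and "b = real_of_ereal (mfun J K j (x k))"
    have ab: "mfun J K l (x k) = ereal a" "mfun J K j (x k) = ereal b"
      unfolding a_def b_def using assms(1) l(1) j(1) by (simp_all add: mfun_eq_ereal[symmetric])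
    have "\<bar>a - b\<bar> \<le> real CARD('n) * norm (Phi J K (x k))"
      unfolding a_def b_def by (rule abs_mfun_diff_le_norm_Phi[OF j(1) l(1)])
    moreover have "L \<le> a" "b < L - real CARD('n) * \<bar>Z\<bar>"
      using l(2) elim(2) ab by simp_all
    ultimately have "real CARD('n) * \<bar>Z\<bar> \<le> real CARD('n) * norm (Phi J K (x k))"
      by linarith
    then have "\<bar>Z\<bar> \<le> norm (Phi J K (x k))"
      by (simp add: mult_le_cancel_left_pos)
    then show ?case
      by linarith
  qed
qed

lemma compact_Phi_preimage:
  assumes "compact C"
  shows "compact {y \<in> Yset J K. Phi J K y \<in> C}"
proof -
  have "{y \<in> Yset J K. Phi J K y \<in> C} \<subseteq> cbox 0 1"
    using Sset_coord_bounds by (fastforce simp: Yset_def mem_box_cart less_imp_le)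
  then have "bounded {y \<in> Yset J K. Phi J K y \<in> C}"
    by (rule bounded_subset[OF bounded_cbox])
  moreover have "closed {y \<in> Yset J K. Phi J K y \<in> C}"
    unfolding closed_sequential_limits
  proof (intro allI impI)
    fix x y assume "(\<forall>k. x k \<in> {y \<in> Yset J K. Phi J K y \<in> C}) \<and> x \<longlonglongrightarrow> y"
    then have xY: "\<forall>k. x k \<in> Yset J K" and xC: "\<And>k. Phi J K (x k) \<in> C" and lim: "x \<longlonglongrightarrow> y"
      by auto
    show "y \<in> {y \<in> Yset J K. Phi J K y \<in> C}"
    proof (cases "y \<in> Yset J K")
      case True
      have "(\<lambda>k. Phi J K (x k)) \<longlonglongrightarrow> Phi J K y"
        using filterlim_compose[OF tendsto_Phi[OF True] lim] .
      then have "Phi J K y \<in> C"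
        using closed_sequentially[OF compact_imp_closed[OF assms], of "\<lambda>k. Phi J K (x k)"] xC by blast
      then show ?thesis
        using True by blast
    next
      case False
      obtain B where B: "\<forall>v\<in>C. norm v \<le> B"
        using compact_imp_bounded[OF assms] by (auto simp: bounded_iff)
      obtain k where "B + 1 \<le> norm (Phi J K (x k))"
        using norm_Phi_tendsto_at_boundary[OF xY lim False]
        unfolding filterlim_at_top eventually_sequentially by blast
      moreover have "norm (Phi J K (x k)) \<le> B"
        using B xC by blast
      ultimately show ?thesis
        by linarith
    qed
  qed
  ultimately show ?thesis
    by (simp add: compact_eq_bounded_closed)
qed

end

theorem proposition4p2:
  fixes J :: "real \<Rightarrow> ereal"
    and K :: "'n::{finite,linorder} \<Rightarrow> real \<Rightarrow> ereal"
  assumes "\<And>i. singular_kernel (K i)"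
    and "n_field_function CARD('n) J"
  shows "(\<forall>C. compact C \<longrightarrow> compact {y \<in> Yset J K. Phi J K y \<in> C})
       \<and> (\<forall>(x :: nat \<Rightarrow> real ^ 'n::{finite,linorder}) y0. (\<forall>k. x k \<in> Yset J K) \<longrightarrow> x \<longlonglongrightarrow> y0 \<longrightarrow>
            y0 \<in> frontier (Yset J K) \<longrightarrow> filterlim (\<lambda>k. norm (Phi J K (x k))) at_top sequentially)"
proof -
  interpret singular_field J K
    using assms by unfold_locales
  have "y0 \<notin> Yset J K" if "y0 \<in> frontier (Yset J K)" for y0
    using that open_Yset by (simp add: frontier_def interior_open)
  then show ?thesis
    using compact_Phi_preimage norm_Phi_tendsto_at_boundary by blast
qed

end
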